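(* Let $n=p_1p_2\cdots p_r$, where $r\geq 3$ and $p_1<p_2<\cdots<p_r$ are prime numbers. Then $$\delta(\mathcal{P}(C_n))=\min\{\deg(p_{r-1}p_r),\ \deg(p_r)\}.$$ Further, $\delta(\mathcal{P}(C_n))=\deg(p_r)$ if and only if $$\phi(p_r)\geq\left(\frac{p_1p_2\cdots p_{r-2}}{\phi(p_1p_2\cdots p_{r-2})}-1\right)\phi(p_{r-1}).$$ In particular, if $\phi(p_r)\geq (r-2)\phi(p_{r-1})$, then $\delta(\mathcal{P}(C_n))=\deg(p_r)$.
   Context: For a finite group $G$, the power graph $\mathcal{P}(G)$ is the simple undirected graph with vertex set $G$ in which two distinct vertices are adjacent if one is an integral power of the other. $C_n$ denotes the cyclic group of order $n$, identified with $\mathbb{Z}_n=\{0,1,\ldots,n-1\}$ (addition mod $n$), so a positive divisor $d$ of $n$ with $d<n$ is regarded as the element $d\in\mathbb{Z}_n$. $\deg(a)$ is the degree of the vertex $a$ in $\mathcal{P}(C_n)$, $\delta(\Gamma)$ is the minimum degree of a graph $\Gamma$, and $\phi$ is Euler's totient function. *)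

theory Defs
  imports "HOL-Number_Theory.Number_Theory"
begin

text \<open>The cyclic group C_n is identified with Z_n = {0,...,n-1} under addition mod n.
  In additive notation, b is an integral power of a iff b = k*a mod n for some integer k.\<close>

definition is_power_cyc :: "nat \<Rightarrow> nat \<Rightarrow> nat \<Rightarrow> bool" where
  "is_power_cyc n b a \<longleftrightarrow> (\<exists>k::int. int b = (k * int a) mod int n)"

definition pg_adj :: "nat \<Rightarrow> nat \<Rightarrow> nat \<Rightarrow> bool" where
  "pg_adj n a b \<longleftrightarrow> a \<in> {0..<n} \<and> b \<in> {0..<n} \<and> a \<noteq> b \<and>
     (is_power_cyc n b a \<or> is_power_cyc n a b)"

definition pg_deg :: "nat \<Rightarrow> nat \<Rightarrow> nat" where
  "pg_deg n a = card {b \<in> {0..<n}. pg_adj n a b}"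

definition pg_min_deg :: "nat \<Rightarrow> nat" where
  "pg_min_deg n = Min (pg_deg n ` {0..<n})"

end

theory Submission
  imports Defs
begin

text \<open>For squarefree n, a vertex a with g = gcd a n and m = n div g is adjacent exactly to the
  multiples of g and to the generators of the subgroups containing a, i.e. the b with
  coprime b m; hence deg a + 1 = m + (g - 1) totient m. In terms of the set X of indices of the
  primes not dividing a, this is P + (\<Prod>i\<in>X. 1 - 1 / p i) (n - P) with P = (\<Prod>i\<in>X. p i).
  For a fixed size of X the smallest primes minimise this value, and along the initial segments
  X = {1..s} it decreases up to s = r - 2. So the minimum is attained at X = {1..r-1}
  (a = p r) or at X = {1..r-2} (a = p (r-1) * p r); comparing these two gives the totient
  criterion, and (\<Prod>i=1..s. 1 - 1 / p i) \<ge> 1 / (s + 1) gives the sufficient condition.\<close>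

lemma is_power_cyc_iff_gcd_dvd:
  assumes "b < n"
  shows "is_power_cyc n b a \<longleftrightarrow> gcd a n dvd b"
proof
  assume "is_power_cyc n b a"
  then obtain k where k: "int b = (k * int a) mod int n"
    unfolding is_power_cyc_def by blast
  have "int (gcd a n) dvd (k * int a) mod int n"
    by (simp add: dvd_mod)
  then show "gcd a n dvd b"
    using k by (metis int_dvd_int_iff)
next
  assume "gcd a n dvd b"
  then obtain t where t: "b = gcd a n * t" ..
  obtain u v where uv: "u * int a + v * int n = gcd (int a) (int n)"
    using bezout_int by blast
  have "(int t * u * int a) mod int n = (int t * (u * int a + v * int n)) mod int n"
    by (metis (no_types, opaque_lifting) mod_mult_self1 distrib_left mult.assoc mult.commute)
  also have "\<dots> = int b mod int n"
    using uv t by (simp add: mult.commute)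
  also have "\<dots> = int b"
    using assms by simp
  finally show "is_power_cyc n b a"
    unfolding is_power_cyc_def by metis
qed

lemma card_coprime_residues:
  assumes "0 < m"
  shows "card {t \<in> {0..<m}. coprime t m} = totient m"
proof -
  have "bij_betw (\<lambda>k. k mod m) (totatives m) {t \<in> {0..<m}. coprime t m}"
  proof (rule bij_betw_imageI)
    show "inj_on (\<lambda>k. k mod m) (totatives m)"
    proof (rule inj_onI)
      fix k l assume "k \<in> totatives m" "l \<in> totatives m" "k mod m = l mod m"
      then show "k = l"
        by (auto simp: in_totatives_iff le_less mod_if split: if_splits)
    qed
    show "(\<lambda>k. k mod m) ` totatives m = {t \<in> {0..<m}. coprime t m}"
    proof (intro equalityI subsetI)
      fix t assume "t \<in> {t \<in> {0..<m}. coprime t m}"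
      then have t: "t < m" "coprime t m" by auto
      show "t \<in> (\<lambda>k. k mod m) ` totatives m"
      proof (cases "t = 0")
        case True
        then have "m \<in> totatives m" "m mod m = t"
          using t assms by (auto simp: in_totatives_iff)
        then show ?thesis by (metis image_eqI)
      next
        case False
        then have "t \<in> totatives m" "t mod m = t"
          using t by (auto simp: in_totatives_iff)
        then show ?thesis by (metis image_eqI)
      qed
    qed (use assms in \<open>auto simp: in_totatives_iff\<close>)
  qed
  then show ?thesis
    by (simp add: bij_betw_same_card totient_def)
qed

lemma card_multiples_below:
  assumes "0 < g"
  shows "card {b \<in> {0..<m * g}. g dvd b} = m"
proof -
  have "{b \<in> {0..<m * g}. g dvd b} = (\<lambda>t. g * t) ` {0..<m}"
    using assms by (auto elim!: dvdE simp: mult.commute)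
  then show ?thesis
    using assms by (simp add: card_image inj_on_def)
qed

lemma card_multiples_coprime_below:
  assumes "0 < g" "0 < m" "coprime g m"
  shows "card {b \<in> {0..<m * g}. g dvd b \<and> coprime b m} = totient m"
proof -
  have "{b \<in> {0..<m * g}. g dvd b \<and> coprime b m} = (\<lambda>t. g * t) ` {t \<in> {0..<m}. coprime t m}"
    using assms by (auto elim!: dvdE simp: mult.commute)
  then show ?thesis
    using assms card_coprime_residues[of m] by (simp add: card_image inj_on_def)
qed

lemma card_coprime_below:
  assumes "0 < m"
  shows "card {b \<in> {0..<m * g}. coprime b m} = g * totient m"
proof -
  define T where "T = {t \<in> {0..<m}. coprime t m}"
  have "bij_betw (\<lambda>(t, u). t + m * u) (T \<times> {0..<g}) {b \<in> {0..<m * g}. coprime b m}"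
  proof (rule bij_betw_imageI)
    show "inj_on (\<lambda>(t, u). t + m * u) (T \<times> {0..<g})"
    proof (rule inj_onI, clarify)
      fix t u t' u' assume "t \<in> T" "t' \<in> T" "t + m * u = t' + m * u'"
      then have "(t + m * u) mod m = (t' + m * u') mod m" "(t + m * u) div m = (t' + m * u') div m"
        by simp_all
      with \<open>t \<in> T\<close> \<open>t' \<in> T\<close> show "t = t' \<and> u = u'"
        by (simp add: T_def)
    qed
    show "(\<lambda>(t, u). t + m * u) ` (T \<times> {0..<g}) = {b \<in> {0..<m * g}. coprime b m}"
    proof (intro equalityI subsetI)
      fix b assume b: "b \<in> {b \<in> {0..<m * g}. coprime b m}"
      then have "b mod m \<in> T" "b div m < g"
        using assms by (auto simp: T_def less_mult_imp_div_less mult.commute)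
      moreover have "b = (\<lambda>(t, u). t + m * u) (b mod m, b div m)"
        by simp
      ultimately show "b \<in> (\<lambda>(t, u). t + m * u) ` (T \<times> {0..<g})"
        by (intro image_eqI) auto
    next
      fix b assume "b \<in> (\<lambda>(t, u). t + m * u) ` (T \<times> {0..<g})"
      then obtain t u where b: "b = t + m * u" "t < m" "coprime t m" "u < g"
        by (auto simp: T_def)
      have "t + m * u < m * (u + 1)"
        using b by simp
      also have "\<dots> \<le> m * g"
        using b by (intro mult_le_mono2) simp
      moreover have "coprime (t + m * u) m"
        using b assms by (metis coprime_mod_left_iff mod_mult_self2 mod_less not_gr0)
      ultimately show "b \<in> {b \<in> {0..<m * g}. coprime b m}"
        using b by simp
    qed
  qed
  then show ?thesis
    using card_coprime_residues[OF assms]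
    by (simp add: bij_betw_same_card[symmetric] card_cartesian_product T_def)
qed

lemma pg_deg_inclusion_exclusion:
  assumes "a < n" "n = m * gcd a n" "coprime (gcd a n) m"
  shows "pg_deg n a + 1 + totient m = m + gcd a n * totient m"
proof -
  define g where "g = gcd a n"
  have g: "0 < g" "n = m * g" "coprime g m"
    using assms by (auto simp: g_def)
  then have m: "0 < m"
    using assms(1) by (cases m) auto
  have a_power_of_b_iff: "gcd b n dvd a \<longleftrightarrow> coprime b m" for b
  proof
    assume "gcd b n dvd a"
    moreover have "gcd b m dvd gcd b n"
      using g(2) by (simp add: dvd_mult2)
    ultimately have "gcd b m dvd a"
      by (rule dvd_trans[rotated])
    moreover have "gcd b m dvd n"
      using g(2) by (simp add: dvd_mult2)
    ultimately have "gcd b m dvd g"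
      unfolding g_def by (rule gcd_greatest)
    then have "gcd b m = 1"
      using g(3) coprime_common_divisor_nat gcd_dvd2 by blast
    then show "coprime b m"
      by (simp only: coprime_iff_gcd_eq_1)
  next
    assume "coprime b m"
    then have "coprime (gcd b n) m"
      by (metis gcd_dvd1 dvdE coprime_mult_left_iff)
    moreover have "gcd b n dvd g * m"
      using g(2) by (simp add: mult.commute)
    ultimately have "gcd b n dvd g"
      by (simp add: coprime_dvd_mult_left_iff)
    then show "gcd b n dvd a"
      unfolding g_def using dvd_trans gcd_dvd1 by blast
  qed
  define A where "A = {b \<in> {0..<n}. g dvd b}"
  define B where "B = {b \<in> {0..<n}. coprime b m}"
  have nbhd: "{b \<in> {0..<n}. pg_adj n a b} = (A \<union> B) - {a}"
  proof -
    have "pg_adj n a b \<longleftrightarrow> b \<in> (A \<union> B) - {a}" if "b < n" for b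
      using that assms(1) unfolding pg_adj_def A_def B_def
      by (simp add: is_power_cyc_iff_gcd_dvd a_power_of_b_iff g_def) blast
    then show ?thesis
      by (auto simp: A_def B_def)
  qed
  have fin: "finite A" "finite B"
    by (simp_all add: A_def B_def)
  have a: "a \<in> A \<union> B"
    using assms(1) by (simp add: A_def g_def)
  then have "pg_deg n a = card (A \<union> B) - 1"
    unfolding pg_deg_def nbhd by (rule card_Diff_singleton)
  moreover have "0 < card (A \<union> B)"
    using fin a card_gt_0_iff by blast
  ultimately have "pg_deg n a + 1 = card (A \<union> B)"
    by simp
  moreover have "card (A \<union> B) + card (A \<inter> B) = card A + card B"
    using fin by (rule card_Un_Int[symmetric])
  moreover have "card A = m"
    unfolding A_def g(2) by (rule card_multiples_below[OF g(1)])
  moreover have "card B = g * totient m"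
    unfolding B_def g(2) by (rule card_coprime_below[OF m])
  moreover have "card (A \<inter> B) = totient m"
  proof -
    have "A \<inter> B = {b \<in> {0..<m * g}. g dvd b \<and> coprime b m}"
      by (auto simp: A_def B_def g(2))
    then show ?thesis
      using card_multiples_coprime_below[OF g(1) m g(3)] by simp
  qed
  ultimately show ?thesis
    unfolding g_def by linarith
qed

lemma prod_primes_dvd:
  fixes p :: "'i \<Rightarrow> nat"
  assumes "finite J" "\<forall>i\<in>J. prime (p i)" "inj_on p J" "\<forall>i\<in>J. p i dvd a"
  shows "(\<Prod>i\<in>J. p i) dvd a"
  using assms
proof (induction J rule: finite_induct)
  case (insert k J)
  have "coprime (p k) (\<Prod>i\<in>J. p i)"
  proof (rule prod_coprime_right)
    fix i assume "i \<in> J"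
    then have "p i \<noteq> p k"
      using insert.hyps(2) insert.prems(2) inj_on_eq_iff[of p "insert k J" i k] by auto
    then show "coprime (p k) (p i)"
      using insert.prems(1) \<open>i \<in> J\<close> by (intro primes_coprime) auto
  qed
  then show ?case
    using insert by (simp add: divides_mult)
qed simp

lemma real_totient_prod_primes:
  fixes p :: "'i \<Rightarrow> nat"
  assumes "\<forall>i\<in>X. prime (p i)" "inj_on p X"
  shows "real (totient (\<Prod>i\<in>X. p i)) = (\<Prod>i\<in>X. real (p i)) * (\<Prod>i\<in>X. 1 - 1 / real (p i))"
proof -
  have "pairwise coprime (p ` X)"
    using assms(1) by (auto simp: pairwise_def intro!: primes_coprime)
  then have "totient (\<Prod>i\<in>X. p i) = (\<Prod>i\<in>X. p i - 1)"
    using assms by (simp add: totient_prod_coprime totient_prime)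
  also have "real \<dots> = (\<Prod>i\<in>X. real (p i) * (1 - 1 / real (p i)))"
    unfolding of_nat_prod
  proof (rule prod.cong[OF refl])
    fix i assume "i \<in> X"
    then have "0 < p i"
      using assms(1) prime_gt_0_nat by blast
    then show "real (p i - 1) = real (p i) * (1 - 1 / real (p i))"
      by (simp add: of_nat_diff right_diff_distrib)
  qed
  finally show ?thesis
    by (simp add: prod.distrib)
qed

lemma prod_over_totient_prod_primes:
  fixes p :: "'i \<Rightarrow> nat"
  assumes "\<forall>i\<in>X. prime (p i)" "inj_on p X"
  shows "real (\<Prod>i\<in>X. p i) / real (totient (\<Prod>i\<in>X. p i)) = 1 / (\<Prod>i\<in>X. 1 - 1 / real (p i))"
proof -
  have "0 < (\<Prod>i\<in>X. real (p i))"
    using assms(1) by (intro prod_pos) (auto intro: prime_gt_0_nat)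
  then show ?thesis
    using real_totient_prod_primes[OF assms] by simp
qed

text \<open>For n = (\<Prod>i\<in>I. p i) with distinct primes p i, the degree of a vertex a plus one is
  nbhd_size (\<lambda>i. real (p i)) I X, where X indexes the primes not dividing a.\<close>

definition nbhd_size :: "('i \<Rightarrow> real) \<Rightarrow> 'i set \<Rightarrow> 'i set \<Rightarrow> real" where
  "nbhd_size q I X = (\<Prod>i\<in>X. q i) + (\<Prod>i\<in>X. 1 - 1 / q i) * ((\<Prod>i\<in>I. q i) - (\<Prod>i\<in>X. q i))"

lemma pg_deg_prod_primes:
  fixes p :: "'i \<Rightarrow> nat"
  assumes "finite I" "\<forall>i\<in>I. prime (p i)" "inj_on p I" "n = (\<Prod>i\<in>I. p i)" "a < n"
  shows "real (pg_deg n a) + 1 = nbhd_size (\<lambda>i. real (p i)) I {i \<in> I. \<not> p i dvd a}"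
proof -
  define X where "X = {i \<in> I. \<not> p i dvd a}"
  define J where "J = {i \<in> I. p i dvd a}"
  define m where "m = (\<Prod>i\<in>X. p i)"
  define g where "g = (\<Prod>i\<in>J. p i)"
  have I: "I = J \<union> X" "J \<inter> X = {}" "finite J" "finite X"
    using assms(1) by (auto simp: J_def X_def)
  have n: "n = g * m"
    unfolding assms(4) g_def m_def I(1) using I by (simp add: prod.union_disjoint)
  have "g dvd a"
    unfolding g_def
    using I(3) assms(2) inj_on_subset[OF assms(3)] by (intro prod_primes_dvd) (auto simp: J_def)
  moreover have "coprime a m"
    unfolding m_def
  proof (rule prod_coprime_right)
    fix i assume "i \<in> X"
    then show "coprime a (p i)"
      using assms(2) by (auto simp: X_def intro: prime_imp_coprime[THEN coprime_commute[THEN iffD1]])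
  qed
  ultimately have gcd: "gcd a n = g"
    unfolding n by (simp add: gcd_mult_right_right_cancel gcd_proj2_if_dvd)
  have "coprime g m"
    unfolding g_def m_def
  proof (intro prod_coprime_left prod_coprime_right)
    fix i j assume "i \<in> J" "j \<in> X"
    then have "p i \<noteq> p j"
      using assms(3) by (auto simp: J_def X_def)
    then show "coprime (p i) (p j)"
      using assms(2) \<open>i \<in> J\<close> \<open>j \<in> X\<close> by (intro primes_coprime) (auto simp: J_def X_def)
  qed
  then have "pg_deg n a + 1 + totient m = m + g * totient m"
    using pg_deg_inclusion_exclusion[of a n m] assms(5) n gcd by (simp add: mult.commute)
  then have "real (pg_deg n a) + 1 = real m + (real g - 1) * real (totient m)"
    by (simp add: algebra_simps flip: of_nat_mult of_nat_add)
  moreover have "real (totient m) = (\<Prod>i\<in>X. real (p i)) * (\<Prod>i\<in>X. 1 - 1 / real (p i))"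
    unfolding m_def
    using assms(2) inj_on_subset[OF assms(3)] by (intro real_totient_prod_primes) (auto simp: X_def)
  moreover have "(\<Prod>i\<in>I. real (p i)) = real g * (\<Prod>i\<in>X. real (p i))"
    using n by (simp add: assms(4) m_def flip: of_nat_prod)
  ultimately show ?thesis
    unfolding nbhd_size_def X_def[symmetric] by (simp add: m_def algebra_simps)
qed

lemma prod_initial_segment_le:
  fixes f :: "nat \<Rightarrow> real"
  assumes "\<And>i j. 1 \<le> i \<Longrightarrow> i \<le> j \<Longrightarrow> j \<le> r \<Longrightarrow> f i \<le> f j"
    and "\<And>i. 1 \<le> i \<Longrightarrow> i \<le> r \<Longrightarrow> 0 \<le> f i"
    and "X \<subseteq> {1..r}"
  shows "(\<Prod>i=1..card X. f i) \<le> (\<Prod>i\<in>X. f i)"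
  using assms
proof (induction r arbitrary: X)
  case 0
  then show ?case by simp
next
  case (Suc r)
  show ?case
  proof (cases "Suc r \<in> X")
    case False
    then have "X \<subseteq> {1..r}"
      using Suc.prems(3) by (auto simp: le_Suc_eq)
    then show ?thesis
      using Suc by simp
  next
    case True
    define Y where "Y = X - {Suc r}"
    have Y: "Y \<subseteq> {1..r}"
      using Suc.prems(3) by (auto simp: Y_def le_Suc_eq)
    have "finite X"
      using Suc.prems(3) finite_subset by blast
    then have card_X: "card X = Suc (card Y)"
      unfolding Y_def using True by (rule card_Suc_Diff1[symmetric])
    have "card X \<le> Suc r"
      using card_mono[OF _ Suc.prems(3)] by simp
    have "(\<Prod>i=1..card X. f i) = (\<Prod>i=1..card Y. f i) * f (Suc (card Y))"
      by (simp add: card_X)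
    also have "\<dots> \<le> (\<Prod>i\<in>Y. f i) * f (Suc r)"
      using Suc.IH[OF _ _ Y] Suc.prems(1,2) Y card_X \<open>card X \<le> Suc r\<close>
      by (intro mult_mono prod_nonneg) auto
    also have "\<dots> = (\<Prod>i\<in>X. f i)"
      using True \<open>finite X\<close> by (simp add: Y_def prod.remove mult.commute)
    finally show ?thesis .
  qed
qed

text \<open>Equality holds for q i = i + 1, where the product telescopes.\<close>

lemma prod_one_minus_inverse_ge:
  fixes q :: "nat \<Rightarrow> real"
  assumes "\<And>i. 1 \<le> i \<Longrightarrow> i \<le> s \<Longrightarrow> real i + 1 \<le> q i"
  shows "1 / (real s + 1) \<le> (\<Prod>i=1..s. 1 - 1 / q i)"
  using assms
proof (induction s)
  case (Suc s)
  have "1 / (real (Suc s) + 1) = 1 / (real s + 1) * (1 - 1 / (real s + 2))"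
    by (simp add: field_simps)
  also have "\<dots> \<le> (\<Prod>i=1..s. 1 - 1 / q i) * (1 - 1 / q (Suc s))"
  proof (rule mult_mono)
    show "1 / (real s + 1) \<le> (\<Prod>i=1..s. 1 - 1 / q i)"
      using Suc by simp
    show "1 - 1 / (real s + 2) \<le> 1 - 1 / q (Suc s)"
      using Suc.prems[of "Suc s"] by (simp add: frac_le)
    show "0 \<le> (\<Prod>i=1..s. 1 - 1 / q i)"
      using Suc.prems by (intro prod_nonneg) (force simp: field_simps)
  qed simp
  finally show ?case
    by simp
qed simp

lemma nbhd_size_initial_diff:
  fixes q :: "nat \<Rightarrow> real"
  assumes "s < r" "q (s + 1) \<noteq> 0"
  shows "nbhd_size q {1..r} {1..s} - nbhd_size q {1..r} {1..s+1} =
    (\<Prod>i=1..s. q i) *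
      ((\<Prod>i=1..s. 1 - 1 / q i) * (q (s + 1) - 2 + (\<Prod>i=s+2..r. q i)) - (q (s + 1) - 1))"
proof -
  have "(\<Prod>i=1..r. q i) = (\<Prod>i=1..s. q i) * (\<Prod>i=s+1..r. q i)"
    using prod.ub_add_nat[of 1 s q "r - s"] assms(1) by simp
  also have "(\<Prod>i=s+1..r. q i) = q (s + 1) * (\<Prod>i=s+2..r. q i)"
    using assms(1) by (simp add: prod.atLeast_Suc_atMost)
  finally have "(\<Prod>i=1..r. q i) = (\<Prod>i=1..s. q i) * q (s + 1) * (\<Prod>i=s+2..r. q i)"
    by simp
  then show ?thesis
    using assms(2) by (simp add: nbhd_size_def field_simps)
qed

locale gapped_sequence =
  fixes q :: "nat \<Rightarrow> real" and r :: nat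
  assumes first_ge_2: "2 \<le> q 1"
    and gap: "\<And>i j. 1 \<le> i \<Longrightarrow> i < j \<Longrightarrow> j \<le> r \<Longrightarrow> q i + 1 \<le> q j"
begin

lemma index_plus_one_le: "1 \<le> i \<Longrightarrow> i \<le> r \<Longrightarrow> real i + 1 \<le> q i"
proof (induction i)
  case (Suc i)
  then show ?case
    using first_ge_2 gap[of i "Suc i"] by (cases "i = 0") auto
qed simp

lemma two_le: "1 \<le> i \<Longrightarrow> i \<le> r \<Longrightarrow> 2 \<le> q i"
  using index_plus_one_le[of i] by simp

lemma mono: "1 \<le> i \<Longrightarrow> i \<le> j \<Longrightarrow> j \<le> r \<Longrightarrow> q i \<le> q j"
  using gap[of i j] by (cases "i = j") auto

lemma prod_one_minus_inverse_pos:
  assumes "s \<le> r"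
  shows "0 < (\<Prod>i=1..s. 1 - 1 / q i)"
proof (rule prod_pos)
  fix i assume "i \<in> {1..s}"
  then show "0 < 1 - 1 / q i"
    using two_le[of i] assms by simp
qed

lemma inverse_prod_one_minus_inverse_le:
  assumes "s \<le> r"
  shows "1 / (\<Prod>i=1..s. 1 - 1 / q i) \<le> real s + 1"
  using prod_one_minus_inverse_ge[of s q] index_plus_one_le prod_one_minus_inverse_pos[OF assms] assms
  by (simp add: field_simps)

lemma nbhd_size_le_prod:
  assumes "X \<subseteq> {1..r}"
  shows "nbhd_size q {1..r} X \<le> (\<Prod>i=1..r. q i)"
proof -
  have "(\<Prod>i\<in>X. 1 - 1 / q i) \<le> 1"
    using two_le assms by (intro prod_le_1) force
  moreover have "(\<Prod>i\<in>X. q i) \<le> (\<Prod>i=1..r. q i)"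
    using two_le assms by (intro prod_mono2) force+
  ultimately have "0 \<le> (1 - (\<Prod>i\<in>X. 1 - 1 / q i)) * ((\<Prod>i=1..r. q i) - (\<Prod>i\<in>X. q i))"
    by simp
  then show ?thesis
    unfolding nbhd_size_def by (simp add: algebra_simps)
qed

text \<open>Replacing X by the initial segment of the same size decreases both products in
  the definition of nbhd_size.\<close>

lemma nbhd_size_initial_segment_le:
  assumes X: "X \<subseteq> {1..r}"
  shows "nbhd_size q {1..r} {1..card X} \<le> nbhd_size q {1..r} X"
proof -
  define N where "N = (\<Prod>i=1..r. q i)"
  define M where "M = (\<Prod>i\<in>X. q i)"
  define P where "P = (\<Prod>i\<in>X. 1 - 1 / q i)"
  define M' where "M' = (\<Prod>i=1..card X. q i)"
  define P' where "P' = (\<Prod>i=1..card X. 1 - 1 / q i)"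
  have "M' \<le> M"
    unfolding M'_def M_def
  proof (rule prod_initial_segment_le[OF _ _ X])
    fix i :: nat assume "1 \<le> i" "i \<le> r"
    then show "0 \<le> q i"
      using two_le[of i] by simp
  qed (rule mono)
  moreover have "P' \<le> P"
    unfolding P'_def P_def
  proof (rule prod_initial_segment_le[OF _ _ X])
    fix i j :: nat assume "1 \<le> i" "i \<le> j" "j \<le> r"
    then show "1 - 1 / q i \<le> 1 - 1 / q j"
      using mono[of i j] two_le[of i] by (simp add: frac_le)
  next
    fix i :: nat assume "1 \<le> i" "i \<le> r"
    then show "0 \<le> 1 - 1 / q i"
      using two_le[of i] by simp
  qed
  moreover have "P \<le> 1"
    unfolding P_def using two_le X by (intro prod_le_1) force
  moreover have "M \<le> N"
    unfolding M_def N_def using two_le X by (intro prod_mono2) force+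
  ultimately have "0 \<le> (M - M') * (1 - P) + (P - P') * (N - M')"
    by simp
  also have "\<dots> = nbhd_size q {1..r} X - nbhd_size q {1..r} {1..card X}"
    unfolding nbhd_size_def M_def M'_def P_def P'_def N_def by (simp add: algebra_simps)
  finally show ?thesis
    by simp
qed

lemma nbhd_size_initial_step:
  assumes "s + 3 \<le> r"
  shows "nbhd_size q {1..r} {1..s+1} \<le> nbhd_size q {1..r} {1..s}"
proof -
  define M where "M = (\<Prod>i=1..s. q i)"
  define P where "P = (\<Prod>i=1..s. 1 - 1 / q i)"
  define Q where "Q = q (s + 1)"
  define C where "C = (\<Prod>i=s+2..r. q i)"
  have Q: "real s + 2 \<le> Q"
    using index_plus_one_le[of "s + 1"] assms by (simp add: Q_def)
  have P: "1 / (real s + 1) \<le> P"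
    unfolding P_def using index_plus_one_le assms by (intro prod_one_minus_inverse_ge) auto
  have "0 \<le> P"
    unfolding P_def using prod_one_minus_inverse_pos[of s] assms by simp
  txt \<open>C contains the factors q (s+2) \<ge> Q + 1 and q (s+3) \<ge> s + 4, so P C \<ge> Q - 1.\<close>
  have C: "C = q (s + 2) * (q (s + 3) * (\<Prod>i=s+4..r. q i))"
    unfolding C_def using assms
    by (simp add: prod.atLeast_Suc_atMost numeral_eq_Suc)
  have "1 \<le> (\<Prod>i=s+4..r. q i)"
  proof (rule prod_ge_1)
    fix i assume "i \<in> {s+4..r}"
    then show "1 \<le> q i"
      using two_le[of i] by simp
  qed
  moreover have "real s + 4 \<le> q (s + 3)"
    using index_plus_one_le[of "s + 3"] assms by simp
  ultimately have "real s + 1 \<le> q (s + 3) * (\<Prod>i=s+4..r. q i)"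
    using mult_le_cancel_left1[of "q (s + 3)" "\<Prod>i=s+4..r. q i"] by linarith
  moreover have "Q - 1 \<le> q (s + 2)"
    using gap[of "s + 1" "s + 2"] assms by (simp add: Q_def)
  ultimately have "(Q - 1) * (real s + 1) \<le> C"
    unfolding C using Q by (intro mult_mono) auto
  then have "Q - 1 \<le> P * C"
    using P \<open>0 \<le> P\<close> Q mult_mono[of "1 / (real s + 1)" P "(Q - 1) * (real s + 1)" C]
    by simp
  also have "\<dots> \<le> P * (Q - 2 + C)"
    using \<open>0 \<le> P\<close> Q by (intro mult_left_mono) auto
  finally have "0 \<le> M * (P * (Q - 2 + C) - (Q - 1))"
    unfolding M_def using two_le assms by (intro mult_nonneg_nonneg prod_nonneg) force+
  also have "\<dots> = nbhd_size q {1..r} {1..s} - nbhd_size q {1..r} {1..s+1}"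
    unfolding M_def P_def Q_def C_def using assms Q
    by (intro nbhd_size_initial_diff[symmetric]) (auto simp: Q_def)
  finally show ?thesis
    by simp
qed

lemma nbhd_size_initial_antimono:
  assumes "s \<le> r - 2"
  shows "nbhd_size q {1..r} {1..r-2} \<le> nbhd_size q {1..r} {1..s}"
  using assms
proof (induction s rule: inc_induct)
  case (step s)
  then have "s + 3 \<le> r"
    by linarith
  then show ?case
    using nbhd_size_initial_step[of s] step.IH by simp
qed simp

lemma nbhd_size_min:
  assumes "3 \<le> r" "X \<subseteq> {1..r}"
  shows "min (nbhd_size q {1..r} {1..r-1}) (nbhd_size q {1..r} {1..r-2}) \<le> nbhd_size q {1..r} X"
proof -
  have "card X \<le> r"
    using card_mono[OF _ assms(2)] by simp
  then consider "card X \<le> r - 2" | "card X = r - 1" | "card X = r"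
    by linarith
  then have "min (nbhd_size q {1..r} {1..r-1}) (nbhd_size q {1..r} {1..r-2})
      \<le> nbhd_size q {1..r} {1..card X}"
  proof cases
    case 1
    then show ?thesis
      using nbhd_size_initial_antimono[OF 1] by (simp add: min_le_iff_disj)
  next
    case 2
    then show ?thesis
      by simp
  next
    case 3
    then have "nbhd_size q {1..r} {1..card X} = (\<Prod>i=1..r. q i)"
      by (simp add: nbhd_size_def)
    then show ?thesis
      using nbhd_size_le_prod[of "{1..r-1}"] by (simp add: min_le_iff_disj)
  qed
  also have "\<dots> \<le> nbhd_size q {1..r} X"
    by (rule nbhd_size_initial_segment_le[OF assms(2)])
  finally show ?thesis .
qed

lemma nbhd_size_last_le_iff:
  assumes "3 \<le> r"
  shows "nbhd_size q {1..r} {1..r-1} \<le> nbhd_size q {1..r} {1..r-2} \<longleftrightarrow>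
    (1 / (\<Prod>i=1..r-2. 1 - 1 / q i) - 1) * (q (r - 1) - 1) \<le> q r - 1"
proof -
  define M where "M = (\<Prod>i=1..r-2. q i)"
  define P where "P = (\<Prod>i=1..r-2. 1 - 1 / q i)"
  have "0 < M"
    unfolding M_def using two_le by (intro prod_pos) force
  have "0 < P"
    unfolding P_def using prod_one_minus_inverse_pos[of "r - 2"] by simp
  have r: "r - 2 + 1 = r - 1" "r - 2 + 2 = r" "r - 2 < r"
    using assms by simp_all
  have "2 \<le> q (r - 1)"
    using assms by (intro two_le) auto
  then have "q (r - 1) \<noteq> 0"
    by simp
  have "nbhd_size q {1..r} {1..r-2} - nbhd_size q {1..r} {1..r-1} =
      M * (P * (q (r - 1) - 2 + q r) - (q (r - 1) - 1))"
    using nbhd_size_initial_diff[of "r - 2" r q] r(3) \<open>q (r - 1) \<noteq> 0\<close>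
    unfolding M_def P_def r by simp
  also have "\<dots> = M * (P * ((q r - 1) - (1 / P - 1) * (q (r - 1) - 1)))"
    using \<open>0 < P\<close> by (simp add: field_simps)
  finally have "nbhd_size q {1..r} {1..r-1} \<le> nbhd_size q {1..r} {1..r-2} \<longleftrightarrow>
      0 \<le> M * (P * ((q r - 1) - (1 / P - 1) * (q (r - 1) - 1)))"
    by linarith
  also have "\<dots> \<longleftrightarrow> (1 / P - 1) * (q (r - 1) - 1) \<le> q r - 1"
    using \<open>0 < M\<close> \<open>0 < P\<close> by (simp add: zero_le_mult_iff)
  finally show ?thesis
    unfolding P_def .
qed

end

locale increasing_primes_prod =
  fixes p :: "nat \<Rightarrow> nat" and r n :: nat
  assumes three_le: "3 \<le> r"
    and prime: "\<And>i. i \<in> {1..r} \<Longrightarrow> prime (p i)"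
    and less: "\<And>i j. i \<in> {1..r} \<Longrightarrow> j \<in> {1..r} \<Longrightarrow> i < j \<Longrightarrow> p i < p j"
    and n_eq: "n = (\<Prod>i=1..r. p i)"
begin

lemma inj_on_p: "inj_on p {1..r}"
  by (rule inj_onI) (metis less less_irrefl linorder_neqE_nat)

sublocale gapped_sequence "\<lambda>i. real (p i)" r
proof
  show "2 \<le> real (p 1)"
    using prime[of 1] three_le prime_ge_2_nat by force
  show "real (p i) + 1 \<le> real (p j)" if "1 \<le> i" "i < j" "j \<le> r" for i j
    using less[of i j] that by simp
qed

lemma not_dvd_prod_iff:
  assumes "J \<subseteq> {1..r}" "i \<in> {1..r}"
  shows "\<not> p i dvd (\<Prod>j\<in>J. p j) \<longleftrightarrow> i \<notin> J"
proof -
  have "p i dvd (\<Prod>j\<in>J. p j) \<longleftrightarrow> (\<exists>j\<in>J. p i dvd p j)"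
    using assms prime finite_subset by (intro prime_dvd_prod_iff) auto
  also have "\<dots> \<longleftrightarrow> i \<in> J"
  proof
    assume "\<exists>j\<in>J. p i dvd p j"
    then obtain j where "j \<in> J" "p i dvd p j" ..
    then have "p i = p j"
      using assms prime by (intro primes_dvd_imp_eq) auto
    then show "i \<in> J"
      using assms \<open>j \<in> J\<close> inj_on_eq_iff[OF inj_on_p] by auto
  qed (intro bexI[of _ i], auto)
  finally show ?thesis
    by simp
qed

lemma prod_less:
  assumes "J \<subset> {1..r}"
  shows "(\<Prod>j\<in>J. p j) < n"
proof -
  obtain k where k: "k \<in> {1..r}" "k \<notin> J"
    using assms by blast
  have ge_1: "1 \<le> p i" if "i \<in> {1..r}" for i
    using prime[OF that] prime_ge_1_nat by blast
  have "n = (\<Prod>j\<in>{1..r} - J. p j) * (\<Prod>j\<in>J. p j)"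
    unfolding n_eq using assms by (intro prod.subset_diff) auto
  also have "(\<Prod>j\<in>{1..r} - J. p j) = p k * (\<Prod>j\<in>{1..r} - J - {k}. p j)"
    using k by (intro prod.remove) auto
  finally have "n = p k * (\<Prod>j\<in>{1..r} - J - {k}. p j) * (\<Prod>j\<in>J. p j)" .
  moreover have "2 \<le> p k * (\<Prod>j\<in>{1..r} - J - {k}. p j)"
  proof -
    have "1 \<le> (\<Prod>j\<in>{1..r} - J - {k}. p j)"
      using ge_1 by (intro prod_ge_1) auto
    then show ?thesis
      using prime_ge_2_nat[OF prime[OF k(1)]] mult_le_mono[of 2 "p k" 1] by simp
  qed
  moreover have "0 < (\<Prod>j\<in>J. p j)"
  proof (rule prod_pos)
    fix j assume "j \<in> J"
    then show "0 < p j"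
      using assms ge_1[of j] by auto
  qed
  ultimately show ?thesis
    by simp
qed

lemma pg_deg_prod:
  assumes "J \<subset> {1..r}"
  shows "real (pg_deg n (\<Prod>j\<in>J. p j)) + 1 = nbhd_size (\<lambda>i. real (p i)) {1..r} ({1..r} - J)"
proof -
  have "{i \<in> {1..r}. \<not> p i dvd (\<Prod>j\<in>J. p j)} = {1..r} - J"
    using not_dvd_prod_iff[OF psubset_imp_subset[OF assms]] by blast
  then show ?thesis
    using pg_deg_prod_primes[OF _ _ inj_on_p n_eq prod_less[OF assms]] prime by simp
qed

lemma last_psubset: "{r} \<subset> {1..r}" and last_two_psubset: "{r - 1, r} \<subset> {1..r}"
proof -
  have "1 \<in> {1..r}" "1 \<notin> {r - 1, r}" "{r - 1, r} \<subseteq> {1..r}"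
    using three_le by auto
  then show "{r} \<subset> {1..r}" "{r - 1, r} \<subset> {1..r}"
    by blast+
qed

lemma pg_deg_last: "real (pg_deg n (p r)) + 1 = nbhd_size (\<lambda>i. real (p i)) {1..r} {1..r-1}"
proof -
  have "{1..r} - {r} = {1..r-1}"
    by auto
  then show ?thesis
    using pg_deg_prod[OF last_psubset] by simp
qed

lemma pg_deg_last_two:
  "real (pg_deg n (p (r - 1) * p r)) + 1 = nbhd_size (\<lambda>i. real (p i)) {1..r} {1..r-2}"
proof -
  have "{1..r} - {r - 1, r} = {1..r-2}"
    using three_le by auto
  then show ?thesis
    using pg_deg_prod[OF last_two_psubset] three_le by simp
qed

lemma pg_min_deg_eq: "pg_min_deg n = min (pg_deg n (p (r - 1) * p r)) (pg_deg n (p r))"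
  unfolding pg_min_deg_def
proof (rule Min_eqI)
  have "p r < n" "p (r - 1) * p r < n"
    using prod_less[OF last_psubset] prod_less[OF last_two_psubset] three_le by simp_all
  then show "min (pg_deg n (p (r - 1) * p r)) (pg_deg n (p r)) \<in> pg_deg n ` {0..<n}"
    by (simp add: min_def)
next
  fix d assume "d \<in> pg_deg n ` {0..<n}"
  then obtain a where a: "a < n" "d = pg_deg n a"
    by auto
  have "min (nbhd_size (\<lambda>i. real (p i)) {1..r} {1..r-1}) (nbhd_size (\<lambda>i. real (p i)) {1..r} {1..r-2})
      \<le> nbhd_size (\<lambda>i. real (p i)) {1..r} {i \<in> {1..r}. \<not> p i dvd a}"
    using three_le by (intro nbhd_size_min) auto
  then show "min (pg_deg n (p (r - 1) * p r)) (pg_deg n (p r)) \<le> d"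
    using pg_deg_prod_primes[OF _ _ inj_on_p n_eq a(1)] prime
    unfolding a(2) pg_deg_last[symmetric] pg_deg_last_two[symmetric] by auto
qed simp

lemma pg_min_deg_eq_last_iff:
  "pg_min_deg n = pg_deg n (p r) \<longleftrightarrow>
    real (totient (p r)) \<ge>
      (real (\<Prod>i=1..r-2. p i) / real (totient (\<Prod>i=1..r-2. p i)) - 1) * real (totient (p (r - 1)))"
proof -
  have totient_prime: "real (totient (p i)) = real (p i) - 1" if "i \<in> {1..r}" for i
    using prime[OF that] prime_ge_1_nat[OF prime[OF that]] by (simp add: totient_prime of_nat_diff)
  have "real (\<Prod>i=1..r-2. p i) / real (totient (\<Prod>i=1..r-2. p i)) =
      1 / (\<Prod>i=1..r-2. 1 - 1 / real (p i))"
    using prime inj_on_subset[OF inj_on_p] by (intro prod_over_totient_prod_primes) auto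
  then show ?thesis
    using nbhd_size_last_le_iff[OF three_le] pg_deg_last pg_deg_last_two pg_min_deg_eq
      totient_prime[of r] totient_prime[of "r - 1"] three_le
    by auto
qed

lemma pg_min_deg_eq_last_if:
  assumes "(r - 2) * totient (p (r - 1)) \<le> totient (p r)"
  shows "pg_min_deg n = pg_deg n (p r)"
proof -
  have "real (\<Prod>i=1..r-2. p i) / real (totient (\<Prod>i=1..r-2. p i)) - 1 \<le> real (r - 2)"
    using inverse_prod_one_minus_inverse_le[of "r - 2"] prime inj_on_subset[OF inj_on_p]
    by (subst prod_over_totient_prod_primes) auto
  then have "(real (\<Prod>i=1..r-2. p i) / real (totient (\<Prod>i=1..r-2. p i)) - 1) * real (totient (p (r - 1)))
      \<le> real (r - 2) * real (totient (p (r - 1)))"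
    by (rule mult_right_mono) simp
  also have "\<dots> \<le> real (totient (p r))"
    using assms by (metis of_nat_le_iff of_nat_mult)
  finally show ?thesis
    using pg_min_deg_eq_last_iff by simp
qed

end

theorem theorem1p2:
  fixes p :: "nat \<Rightarrow> nat" and r n :: nat
  assumes "r \<ge> 3"
    and "\<And>i. i \<in> {1..r} \<Longrightarrow> prime (p i)"
    and "\<And>i j. i \<in> {1..r} \<Longrightarrow> j \<in> {1..r} \<Longrightarrow> i < j \<Longrightarrow> p i < p j"
    and "n = (\<Prod>i=1..r. p i)"
  shows "pg_min_deg n = min (pg_deg n (p (r-1) * p r)) (pg_deg n (p r)) \<and>
         (pg_min_deg n = pg_deg n (p r) \<longleftrightarrow>
           real (totient (p r)) \<ge>
             (real (\<Prod>i=1..r-2. p i) / real (totient (\<Prod>i=1..r-2. p i)) - 1)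
               * real (totient (p (r-1)))) \<and>
         (totient (p r) \<ge> (r - 2) * totient (p (r-1)) \<longrightarrow> pg_min_deg n = pg_deg n (p r))"
proof -
  interpret increasing_primes_prod p r n
    using assms by unfold_locales
  show ?thesis
    using pg_min_deg_eq pg_min_deg_eq_last_iff pg_min_deg_eq_last_if by blast
qed

end
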